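(* For $f\in L^2(\mathbb{S}^1,\mathbb{C})$, identified with a $1$-periodic function on $\mathbb{R}$ via $z=e^{2\pi i\phi}$, define \[ \mathcal{T}f(\phi)=\frac12\Big[f\big(\tfrac{\phi}{2}\big)+f\big(\tfrac{\phi+1}{2}\big)\Big]+\frac{e^{\pi i\phi}}{2}\Big[f\big(\tfrac{3\phi}{2}\big)-f\big(\tfrac{3\phi+1}{2}\big)\Big]. \] Then Lebesgue measure $dx$ on $\mathbb{S}^1\cong[0,1)$ is invariant for $\mathcal{T}$: \[ \int_{\mathbb{S}^1}\mathcal{T}f\,dx=\int_{\mathbb{S}^1}f\,dx\quad\text{for all }f\in L^2(\mathbb{S}^1,\mathbb{C}). \]
   Context: $\mathbb{S}^1$ is the unit circle, parametrized by $\phi\in[0,1)$, and functions on it are identified with $1$-periodic functions on $\mathbb{R}$. This operator is the restriction to the unit circle of the operator $\sum a_nz^n\mapsto\sum a_nz^{T(n)}$, where $T$ is the Collatz map $T(n)=\frac{3n+1}2$ ($n$ odd), $T(n)=\frac n2$ ($n$ even). *)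

theory Defs
  imports "HOL-Analysis.Analysis"
begin

text \<open>Functions on the unit circle are identified with 1-periodic functions on the reals
  (parameter \<phi> \<in> [0,1), z = exp(2 pi i \<phi>)).\<close>

definition periodic1 :: "(real \<Rightarrow> complex) \<Rightarrow> bool" where
  "periodic1 f \<longleftrightarrow> (\<forall>x. f (x + 1) = f x)"

definition L2_circle :: "(real \<Rightarrow> complex) \<Rightarrow> bool" where
  "L2_circle f \<longleftrightarrow> f \<in> borel_measurable lborel \<and> periodic1 f \<and>
     set_integrable lborel {0..<1} (\<lambda>x. (norm (f x))^2)"

definition collatz_op :: "(real \<Rightarrow> complex) \<Rightarrow> real \<Rightarrow> complex" where
  "collatz_op f \<phi> =
     (1/2) * (f (\<phi>/2) + f ((\<phi>+1)/2))
     + exp (complex_of_real (pi * \<phi>) * \<i>) / 2 * (f (3*\<phi>/2) - f ((3*\<phi>+1)/2))"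

end

theory Submission
  imports Defs
begin

text \<open>Substituting y = \<phi>/2 and y = (\<phi>+1)/2, the first bracket of the operator integrates to
  the integral of f over [0,1). For the second bracket put g(y) = exp(2\<pi>iy/3) f(y): by periodicity
  of f its integrand is g(3\<phi>/2) + g(3\<phi>/2 + 3/2), so it integrates to 2/3 of the integral of g
  over [0,3). Since g(y+1) = \<omega> g(y) with \<omega> = exp(2\<pi>i/3), that integral is (1 + \<omega> + \<omega>^2)
  times the integral of g over [0,1), i.e. zero.\<close>

lemma set_integral_real_affine:
  fixes g :: "real \<Rightarrow> 'a::{banach, second_countable_topology}"
  assumes c: "c > 0"
  shows "(LINT x:{a..<b}|lborel. g (c*x + t)) = (1/c) *\<^sub>R (LINT y:{c*a+t..<c*b+t}|lborel. g y)"
proof -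
  have ind: "indicator {c*a+t..<c*b+t} (t + c*x) = (indicator {a..<b} x :: real)" for x
    using c by (auto simp: indicator_def)
  have "(LINT y:{c*a+t..<c*b+t}|lborel. g y) =
      c *\<^sub>R (\<integral>x. indicator {c*a+t..<c*b+t} (t + c*x) *\<^sub>R g (t + c*x) \<partial>lborel)"
    unfolding set_lebesgue_integral_def
    using lborel_integral_real_affine[of c "\<lambda>y. indicator {c*a+t..<c*b+t} y *\<^sub>R g y" t] c
    by simp
  also have "\<dots> = c *\<^sub>R (LINT x:{a..<b}|lborel. g (c*x + t))"
    unfolding set_lebesgue_integral_def ind by (simp add: add.commute)
  finally show ?thesis
    using c by simp
qed

lemma set_integrable_real_affine_iff:
  fixes g :: "real \<Rightarrow> 'a::{banach, second_countable_topology}"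
  assumes c: "c > 0"
  shows "set_integrable lborel {a..<b} (\<lambda>x. g (c*x + t)) \<longleftrightarrow> set_integrable lborel {c*a+t..<c*b+t} g"
proof -
  have "(\<lambda>x. indicator {c*a+t..<c*b+t} (t + c*x) *\<^sub>R g (t + c*x)) =
      (\<lambda>x. indicator {a..<b} x *\<^sub>R g (c*x + t))"
    using c by (auto simp: indicator_def add.commute)
  then show ?thesis
    unfolding set_integrable_def
    using lborel_integrable_real_affine_iff[of c "\<lambda>y. indicator {c*a+t..<c*b+t} y *\<^sub>R g y" t] c
    by simp
qed

lemma set_integral_atLeastLessThan_split:
  fixes g :: "real \<Rightarrow> 'a::{banach, second_countable_topology}"
  assumes "a \<le> b" "b \<le> c" "set_integrable lborel {a..<c} g"
  shows "(LINT x:{a..<c}|lborel. g x) = (LINT x:{a..<b}|lborel. g x) + (LINT x:{b..<c}|lborel. g x)"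
proof -
  have "set_integrable lborel {a..<b} g" "set_integrable lborel {b..<c} g"
    by (rule set_integrable_subset[OF assms(3)]; use assms in auto)+
  moreover have "{a..<c} = {a..<b} \<union> {b..<c}"
    using assms by auto
  ultimately show ?thesis
    by (simp add: set_integral_Un)
qed

lemma set_integrable_if_square_integrable:
  fixes f :: "'a \<Rightarrow> 'b::{banach, second_countable_topology}"
  assumes f_meas: "f \<in> borel_measurable M" and A: "A \<in> sets M" "emeasure M A < \<infinity>"
    and sq: "set_integrable M A (\<lambda>x. (norm (f x))^2)"
  shows "set_integrable M A f"
proof -
  have "set_integrable M A (\<lambda>x. 1 + (norm (f x))^2)"
    using set_integral_add(1)[OF _ sq] A
    by (simp add: set_integrable_def integrable_indicator_iff)
  then show ?thesis
    unfolding set_integrable_def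
  proof (rule Bochner_Integration.integrable_bound)
    show "(\<lambda>x. indicator A x *\<^sub>R f x) \<in> borel_measurable M"
      using f_meas A by measurable
    have "norm y \<le> 1 + (norm y)^2" for y :: 'b
    proof -
      have "0 \<le> (norm y - 1)^2"
        by simp
      then show ?thesis
        by (simp add: power2_diff) (smt (verit) norm_ge_zero)
    qed
    then show "AE x in M. norm (indicator A x *\<^sub>R f x) \<le> norm (indicator A x *\<^sub>R (1 + (norm (f x))^2))"
      by (intro AE_I2) (auto simp: indicator_def)
  qed
qed

lemma set_integrable_bounded_mult:
  fixes w f :: "'a \<Rightarrow> 'b::{real_normed_field, banach, second_countable_topology}"
  assumes w_meas: "w \<in> borel_measurable M" and w_bound: "\<And>x. norm (w x) \<le> B"
    and f_int: "set_integrable M A f"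
  shows "set_integrable M A (\<lambda>x. w x * f x)"
  unfolding set_integrable_def
proof (rule Bochner_Integration.integrable_bound)
  show "integrable M (\<lambda>x. B *\<^sub>R (indicator A x *\<^sub>R f x))"
    using f_int unfolding set_integrable_def by (rule integrable_scaleR_right)
  have "(\<lambda>x. w x * (indicator A x *\<^sub>R f x)) \<in> borel_measurable M"
    using w_meas borel_measurable_integrable[OF f_int[unfolded set_integrable_def]] by measurable
  then show "(\<lambda>x. indicator A x *\<^sub>R (w x * f x)) \<in> borel_measurable M"
    by simp
  have "B \<ge> 0"
    using norm_ge_zero w_bound order_trans by blast
  then show "AE x in M. norm (indicator A x *\<^sub>R (w x * f x)) \<le> norm (B *\<^sub>R (indicator A x *\<^sub>R f x))"
    using w_bound by (intro AE_I2) (auto simp: norm_mult indicator_def intro: mult_right_mono)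
qed

lemma set_integral_two_halves:
  fixes h :: "real \<Rightarrow> 'a::{banach, second_countable_topology}"
  assumes s: "s > 0" and h_int: "set_integrable lborel {0..<2 * s} h"
  shows "set_integrable lborel {0..<1} (\<lambda>x. h (s * x) + h (s * x + s))"
    and "(LINT x:{0..<1}|lborel. h (s * x) + h (s * x + s)) = (1/s) *\<^sub>R (LINT y:{0..<2 * s}|lborel. h y)"
proof -
  have "set_integrable lborel {0..<s} h" "set_integrable lborel {s..<2 * s} h"
    by (rule set_integrable_subset[OF h_int]; use s in auto)+
  then have lower: "set_integrable lborel {0..<1} (\<lambda>x. h (s * x))"
    and upper: "set_integrable lborel {0..<1} (\<lambda>x. h (s * x + s))"
    using set_integrable_real_affine_iff[OF s, where g=h and a=0 and b=1 and t=0]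
      set_integrable_real_affine_iff[OF s, where g=h and a=0 and b=1 and t=s]
    by (simp_all add: mult_2 [symmetric])
  then show "set_integrable lborel {0..<1} (\<lambda>x. h (s * x) + h (s * x + s))"
    by simp
  have "(LINT x:{0..<1}|lborel. h (s * x) + h (s * x + s)) =
      (1/s) *\<^sub>R (LINT y:{0..<s}|lborel. h y) + (1/s) *\<^sub>R (LINT y:{s..<2 * s}|lborel. h y)"
    using lower upper set_integral_real_affine[OF s, where g=h and a=0 and b=1 and t=0]
      set_integral_real_affine[OF s, where g=h and a=0 and b=1 and t=s]
    by (simp add: mult_2 [symmetric])
  also have "\<dots> = (1/s) *\<^sub>R (LINT y:{0..<2 * s}|lborel. h y)"
    using set_integral_atLeastLessThan_split[of 0 s "2 * s" h] s h_int by (simp add: scaleR_add_right)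
  finally show "(LINT x:{0..<1}|lborel. h (s * x) + h (s * x + s)) = (1/s) *\<^sub>R (LINT y:{0..<2 * s}|lborel. h y)" .
qed

lemma quasiperiodic_shift:
  fixes g :: "real \<Rightarrow> 'a::monoid_mult"
  assumes g_shift: "\<And>x. g (x + 1) = c * g x"
  shows "g (x + real n) = c^n * g x"
proof (induction n)
  case (Suc n)
  have "g (x + real (Suc n)) = c * g (x + real n)"
    using g_shift[of "x + real n"] by (simp add: add_ac)
  with Suc show ?case
    by (simp add: mult.assoc)
qed simp

lemma set_integral_quasiperiodic_translate:
  fixes g :: "real \<Rightarrow> 'a::{real_normed_field, banach, second_countable_topology}"
  assumes g_shift: "\<And>x. g (x + 1) = c * g x" and g_int: "set_integrable lborel {a..<a+1} g"
  shows "set_integrable lborel {a + real n..<a + real n + 1} g"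
    and "(LINT x:{a + real n..<a + real n + 1}|lborel. g x) = c^n * (LINT x:{a..<a+1}|lborel. g x)"
proof -
  have shifted: "g (1*x + real n) = c^n * g x" for x
    using quasiperiodic_shift[where g=g, OF g_shift] by simp
  have "set_integrable lborel {a..<a+1} (\<lambda>x. g (1*x + real n))"
    unfolding shifted using g_int by simp
  then show "set_integrable lborel {a + real n..<a + real n + 1} g"
    using set_integrable_real_affine_iff[where c=1 and a=a and b="a+1" and g=g and t="real n"] by (simp add: add_ac)
  show "(LINT x:{a + real n..<a + real n + 1}|lborel. g x) = c^n * (LINT x:{a..<a+1}|lborel. g x)"
    using set_integral_real_affine[where c=1 and a=a and b="a+1" and g=g and t="real n"] unfolding shifted by (simp add: add_ac)
qed

lemma set_integral_quasiperiodic: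
  fixes g :: "real \<Rightarrow> 'a::{real_normed_field, banach, second_countable_topology}"
  assumes g_shift: "\<And>x. g (x + 1) = c * g x" and g_int: "set_integrable lborel {a..<a+1} g"
  shows "set_integrable lborel {a..<a + real n} g \<and>
    (LINT x:{a..<a + real n}|lborel. g x) = (\<Sum>k<n. c^k) * (LINT x:{a..<a+1}|lborel. g x)"
proof (induction n)
  case 0
  then show ?case
    by (simp add: set_integrable_def set_lebesgue_integral_def)
next
  case (Suc n)
  have split: "{a..<a + real (Suc n)} = {a..<a + real n} \<union> {a + real n..<a + real n + 1}"
    by auto
  note translate = set_integral_quasiperiodic_translate[OF g_shift g_int, of n]
  show ?case
    unfolding split using Suc translate
    by (simp add: set_integrable_Un set_integral_Un distrib_right)
qed

lemma sum_powers_root_unity: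
  assumes "1 < n"
  shows "(\<Sum>k<n. cis (2 * pi / n) ^ k) = 0"
proof -
  have "cis (2 * pi / n) ^ n = cis (n * (2 * pi / n))"
    by (rule Complex.DeMoivre)
  also have "\<dots> = 1"
    using assms by simp
  finally have "cis (2 * pi / n) ^ n = 1" .
  moreover have "cis (2 * pi / n) \<noteq> 1"
  proof
    have inj: "inj_on (\<lambda>k. cis (2 * pi * real k / n)) {..<n}"
      using Complex.bij_betw_roots_unity[of n] assms by (simp add: bij_betw_def)
    assume "cis (2 * pi / n) = 1"
    then have "cis (2 * pi * real 1 / n) = cis (2 * pi * real 0 / n)"
      by simp
    with inj have "1 = (0::nat)"
      by (rule inj_onD) (use assms in auto)
    then show False
      by simp
  qed
  ultimately show ?thesis
    by (simp add: sum_gp_strict)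
qed

lemma set_integral_root_unity_twist:
  fixes f :: "real \<Rightarrow> complex"
  assumes "1 < n" and f_per: "periodic1 f" and f_int: "set_integrable lborel {0..<1} f"
  shows "set_integrable lborel {0..<real n} (\<lambda>y. cis (2 * pi * y / n) * f y)"
    and "(LINT y:{0..<real n}|lborel. cis (2 * pi * y / n) * f y) = 0"
proof -
  define g where "g = (\<lambda>y. cis (2 * pi * y / n) * f y)"
  have g_shift: "g (y + 1) = cis (2 * pi / n) * g y" for y
  proof -
    have "cis (2 * pi * (y + 1) / n) = cis (2 * pi / n) * cis (2 * pi * y / n)"
      by (simp add: cis_mult add_divide_distrib distrib_left add_ac)
    then show ?thesis
      using f_per unfolding g_def periodic1_def by (simp add: mult.assoc)
  qed
  have "continuous_on UNIV (\<lambda>y. cis (2 * pi * y / n))"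
    using assms(1) by (auto intro!: continuous_intros)
  then have "set_integrable lborel {0..<0 + 1} g"
    unfolding g_def using f_int
    by (intro set_integrable_bounded_mult[where B=1]) (auto intro: borel_measurable_continuous_onI)
  then have "set_integrable lborel {0..<real n} g \<and> (LINT y:{0..<real n}|lborel. g y) = 0"
    using set_integral_quasiperiodic[where g=g and a=0 and n=n, OF g_shift] sum_powers_root_unity[OF assms(1)]
    by simp
  then show "set_integrable lborel {0..<real n} (\<lambda>y. cis (2 * pi * y / n) * f y)"
    and "(LINT y:{0..<real n}|lborel. cis (2 * pi * y / n) * f y) = 0"
    unfolding g_def by simp_all
qed

lemma L2_circle_set_integrable:
  assumes "L2_circle f"
  shows "set_integrable lborel {0..<1} f"
proof (rule set_integrable_if_square_integrable)
  show "f \<in> borel_measurable lborel" "set_integrable lborel {0..<1} (\<lambda>x. (norm (f x))^2)"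
    using assms unfolding L2_circle_def by auto
qed simp_all

lemma collatz_op_twisted:
  assumes "periodic1 f"
  shows "collatz_op f x = (f (1/2 * x) + f (1/2 * x + 1/2)) / 2
    + (cis (2 * pi * (3/2 * x) / 3) * f (3/2 * x)
       + cis (2 * pi * (3/2 * x + 3/2) / 3) * f (3/2 * x + 3/2)) / 2"
proof -
  have "3/2 * x + 3/2 = (3*x + 1)/2 + 1"
    by (simp add: field_simps)
  then have shift: "f (3/2 * x + 3/2) = f ((3*x + 1)/2)"
    using assms unfolding periodic1_def by simp
  have lower_twist: "cis (2 * pi * (3/2 * x) / 3) = cis (pi * x)"
    by simp
  have "2 * pi * (3/2 * x + 3/2) / 3 = pi * x + pi"
    by (simp add: field_simps)
  then have "cis (2 * pi * (3/2 * x + 3/2) / 3) = cis (pi * x + pi)"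
    by (rule arg_cong)
  then have upper_twist: "cis (2 * pi * (3/2 * x + 3/2) / 3) = - cis (pi * x)"
    by (simp flip: cis_mult)
  have exp_cis: "exp (complex_of_real (pi * x) * \<i>) = cis (pi * x)"
    by (simp add: cis_conv_exp mult.commute)
  have args: "1/2 * x = x/2" "1/2 * x + 1/2 = (x + 1)/2" "3/2 * x = 3*x/2"
    by simp_all
  show ?thesis
    unfolding collatz_op_def lower_twist upper_twist shift
    unfolding exp_cis args
    by (simp add: field_simps)
qed

theorem mainTheorem5:
  fixes f :: "real \<Rightarrow> complex"
  assumes "L2_circle f"
  shows "(LINT x:{0..<1}|lborel. collatz_op f x) = (LINT x:{0..<1}|lborel. f x)"
proof -
  have f_per: "periodic1 f"
    using assms unfolding L2_circle_def by auto
  have f_int: "set_integrable lborel {0..<1} f"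
    using assms by (rule L2_circle_set_integrable)
  then have f_int_halves: "set_integrable lborel {0..<2 * (1/2)} f"
    by simp
  define g where "g y = cis (2 * pi * y / 3) * f y" for y
  have g_int: "set_integrable lborel {0..<2 * (3/2)} g"
    and g_vanishes: "(LINT y:{0..<2 * (3/2)}|lborel. g y) = 0"
    using set_integral_root_unity_twist[of 3, OF _ f_per f_int] unfolding g_def by simp_all
  have "(LINT x:{0..<1}|lborel. collatz_op f x) =
      (LINT x:{0..<1}|lborel. (f (1/2 * x) + f (1/2 * x + 1/2)) / 2 + (g (3/2 * x) + g (3/2 * x + 3/2)) / 2)"
    using collatz_op_twisted[OF f_per] unfolding g_def by simp
  also have "\<dots> = (LINT x:{0..<1}|lborel. f (1/2 * x) + f (1/2 * x + 1/2)) / 2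
      + (LINT x:{0..<1}|lborel. g (3/2 * x) + g (3/2 * x + 3/2)) / 2"
    using set_integral_two_halves(1)[OF _ f_int_halves] set_integral_two_halves(1)[OF _ g_int] by simp
  also have "\<dots> = (LINT x:{0..<1}|lborel. f x)"
    using set_integral_two_halves(2)[OF _ f_int_halves] set_integral_two_halves(2)[OF _ g_int] g_vanishes
    by (simp add: scaleR_conv_of_real)
  finally show ?thesis .
qed

end
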